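(* Let $(X,d)$ be a compact metric space and $f\colon X\to X$ a continuous map. Assume that for some $k\in\mathbb N$ there are closed sets $Z_1,\dots,Z_k\subseteq X$ with $f(Z_i)\subseteq Z_i$ for each $i$, such that (1) $X=Z_1\cup\dots\cup Z_k$; (2) $Z_i\cap Z_j\ne\emptyset$ for all $i,j$; (3) $f|_{Z_i}\colon Z_i\to Z_i$ is strongly mixing for every $i$. Then $f$ is generically $\varepsilon$-chaotic for every $0<\varepsilon<\frac12\min_i\operatorname{diam} Z_i$.
   Context: A pair $(x,y)\in X^2$ is $\varepsilon$-scrambled if $\liminf_n d(f^n(x),f^n(y))=0$ and $\limsup_n d(f^n(x),f^n(y))>\varepsilon$; $f$ is generically $\varepsilon$-chaotic if the set of $\varepsilon$-scrambled pairs is residual in $X^2$. A map $g\colon Y\to Y$ is strongly mixing if for all nonempty open $U,V\subseteq Y$ there is $n_0$ with $g^n(U)\cap V\ne\emptyset$ for all $n\ge n_0$. *)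

theory Defs
  imports "HOL-Analysis.Analysis"
begin

definition residual_in :: "'a topology \<Rightarrow> 'a set \<Rightarrow> bool" where
  "residual_in T R \<longleftrightarrow>
     (\<exists>\<F>. countable \<F> \<and> (\<forall>U\<in>\<F>. openin T U \<and> T closure_of U = topspace T)
          \<and> topspace T \<inter> \<Inter>\<F> \<subseteq> R)"

definition scrambled_pair :: "('a::metric_space \<Rightarrow> 'a) \<Rightarrow> real \<Rightarrow> 'a \<Rightarrow> 'a \<Rightarrow> bool" where
  "scrambled_pair f eps x y \<longleftrightarrow>
     liminf (\<lambda>n. ereal (dist ((f ^^ n) x) ((f ^^ n) y))) = 0 \<and>
     limsup (\<lambda>n. ereal (dist ((f ^^ n) x) ((f ^^ n) y))) > ereal eps"

definition generically_chaotic :: "'a::metric_space set \<Rightarrow> ('a \<Rightarrow> 'a) \<Rightarrow> real \<Rightarrow> bool" where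
  "generically_chaotic X f eps \<longleftrightarrow>
     residual_in (top_of_set (X \<times> X)) {(x,y) \<in> X \<times> X. scrambled_pair f eps x y}"

definition strongly_mixing_on :: "'a::topological_space set \<Rightarrow> ('a \<Rightarrow> 'a) \<Rightarrow> bool" where
  "strongly_mixing_on Y g \<longleftrightarrow>
     (\<forall>U V. openin (top_of_set Y) U \<and> U \<noteq> {} \<and> openin (top_of_set Y) V \<and> V \<noteq> {} \<longrightarrow>
        (\<exists>n0. \<forall>n\<ge>n0. (g ^^ n) ` U \<inter> V \<noteq> {}))"

end

theory Submission
  imports Defs
begin

text \<open>For every m, the pairs whose orbits come within 1/(j+1) of each other at some time
\<open>n \<ge> m\<close>, and the pairs whose orbits are more than c apart at some time \<open>n \<ge> m\<close>, form open
subsets of \<open>X \<times> X\<close>. On their intersection the orbit distance has liminf 0 and limsup at least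
c, so for \<open>eps < c\<close> it consists of eps-scrambled pairs. Density comes from mixing: for
\<open>x0 \<in> Z i\<close>, \<open>y0 \<in> Z j\<close>, points near x0 and y0 can be sent, at every large time n
simultaneously, near a common point p of \<open>Z i \<inter> Z j\<close> (giving close pairs), or near p and a
point of \<open>Z i\<close> at distance at least half the diameter of \<open>Z i\<close> from p (giving pairs more than
c apart whenever \<open>2 c < diameter (Z i)\<close>).\<close>

lemma funpow_image_subset:
  assumes "f ` X \<subseteq> X"
  shows "(f ^^ n) ` X \<subseteq> X"
  by (induction n) (use assms in auto)

lemma continuous_on_funpow:
  assumes "continuous_on X f" "f ` X \<subseteq> X"
  shows "continuous_on X (f ^^ n)"
proof (induction n)
  case (Suc n)
  then show ?case
    unfolding funpow.simps(2) o_def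
    by (rule continuous_on_compose2[OF assms(1) _ funpow_image_subset[OF assms(2)]])
qed (simp add: continuous_on_id)

lemma strongly_mixing_on_eventually_approaches:
  assumes "strongly_mixing_on A f" "x0 \<in> A" "a \<in> A" "e > 0" "r > 0"
  shows "\<forall>\<^sub>F n in sequentially. \<exists>x\<in>A. dist x x0 < e \<and> dist ((f ^^ n) x) a < r"
proof -
  have "openin (top_of_set A) (A \<inter> ball x0 e)" "openin (top_of_set A) (A \<inter> ball a r)"
    by auto
  moreover have "A \<inter> ball x0 e \<noteq> {}" "A \<inter> ball a r \<noteq> {}"
    using assms by auto
  ultimately obtain n0 where "\<forall>n\<ge>n0. (f ^^ n) ` (A \<inter> ball x0 e) \<inter> (A \<inter> ball a r) \<noteq> {}"
    using assms(1) unfolding strongly_mixing_on_def by blast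
  then show ?thesis
    unfolding eventually_sequentially by (fastforce simp: dist_commute)
qed

lemma strongly_mixing_on_eventually_approaches_pair:
  assumes "strongly_mixing_on A f" "x0 \<in> A" "a \<in> A"
    and "strongly_mixing_on B f" "y0 \<in> B" "b \<in> B" "e > 0" "r > 0"
  shows "\<forall>\<^sub>F n in sequentially. \<exists>x\<in>A. \<exists>y\<in>B. dist x x0 < e \<and> dist y y0 < e \<and>
           dist ((f ^^ n) x) a < r \<and> dist ((f ^^ n) y) b < r"
  using eventually_conj[OF strongly_mixing_on_eventually_approaches[OF assms(1-3,7,8)]
      strongly_mixing_on_eventually_approaches[OF assms(4-8)]]
  by (rule eventually_mono) blast

lemma strongly_mixing_on_eventually_close:
  assumes "strongly_mixing_on A f" "strongly_mixing_on B f" "A \<inter> B \<noteq> {}"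
    and "x0 \<in> A" "y0 \<in> B" "e > 0" "r > 0"
  shows "\<forall>\<^sub>F n in sequentially. \<exists>x\<in>A. \<exists>y\<in>B. dist x x0 < e \<and> dist y y0 < e \<and>
           dist ((f ^^ n) x) ((f ^^ n) y) < r"
proof -
  obtain p where "p \<in> A" "p \<in> B" using assms(3) by blast
  with assms have "\<forall>\<^sub>F n in sequentially. \<exists>x\<in>A. \<exists>y\<in>B. dist x x0 < e \<and> dist y y0 < e \<and>
           dist ((f ^^ n) x) p < r / 2 \<and> dist ((f ^^ n) y) p < r / 2"
    by (intro strongly_mixing_on_eventually_approaches_pair) auto
  moreover have "dist u v < r" if "dist u p < r / 2" "dist v p < r / 2" for u v
    using dist_triangle2[of u v p] that by linarith
  ultimately show ?thesis
    by (elim eventually_mono) meson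
qed

lemma compact_exists_far_point:
  fixes A :: "'a::metric_space set"
  assumes "compact A" "A \<noteq> {}"
  obtains a where "a \<in> A" "diameter A \<le> 2 * dist a c"
proof -
  obtain a1 a2 where "a1 \<in> A" "a2 \<in> A" "dist a1 a2 = diameter A"
    using diameter_compact_attained[OF assms] by blast
  with dist_triangle2[of a1 a2 c]
  have "diameter A \<le> 2 * dist a1 c \<or> diameter A \<le> 2 * dist a2 c"
    by linarith
  then show ?thesis
    using that \<open>a1 \<in> A\<close> \<open>a2 \<in> A\<close> by blast
qed

lemma strongly_mixing_on_eventually_apart:
  assumes "strongly_mixing_on A f" "strongly_mixing_on B f" "A \<inter> B \<noteq> {}" "compact A"
    and "x0 \<in> A" "y0 \<in> B" "e > 0" "2 * c < diameter A"
  shows "\<forall>\<^sub>F n in sequentially. \<exists>x\<in>A. \<exists>y\<in>B. dist x x0 < e \<and> dist y y0 < e \<and>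
           c < dist ((f ^^ n) x) ((f ^^ n) y)"
proof -
  obtain p where "p \<in> A" "p \<in> B" using assms(3) by blast
  obtain a where "a \<in> A" and far: "diameter A \<le> 2 * dist a p"
    using compact_exists_far_point[OF assms(4)] assms(5) by blast
  define r where "r = (dist a p - c) / 2"
  have "r > 0" using assms(8) far by (simp add: r_def)
  with assms \<open>a \<in> A\<close> \<open>p \<in> B\<close>
  have "\<forall>\<^sub>F n in sequentially. \<exists>x\<in>A. \<exists>y\<in>B. dist x x0 < e \<and> dist y y0 < e \<and>
           dist ((f ^^ n) x) a < r \<and> dist ((f ^^ n) y) p < r"
    by (intro strongly_mixing_on_eventually_approaches_pair) auto
  moreover have "c < dist u v" if "dist u a < r" "dist v p < r" for u v
    using dist_triangle[of a p u] dist_triangle[of u p v] that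
    by (simp add: r_def dist_commute)
  ultimately show ?thesis
    by (elim eventually_mono) meson
qed

lemma strongly_mixing_cover_eventually_close:
  assumes "X = \<Union>(Z ` I)" "\<And>i j. i \<in> I \<Longrightarrow> j \<in> I \<Longrightarrow> Z i \<inter> Z j \<noteq> {}"
    and "\<And>i. i \<in> I \<Longrightarrow> strongly_mixing_on (Z i) f"
    and "x0 \<in> X" "y0 \<in> X" "e > 0" "r > 0"
  shows "\<forall>\<^sub>F n in sequentially. \<exists>x\<in>X. \<exists>y\<in>X. dist x x0 < e \<and> dist y y0 < e \<and>
           dist ((f ^^ n) x) ((f ^^ n) y) < r"
proof -
  obtain i j where ij: "i \<in> I" "j \<in> I" and x0: "x0 \<in> Z i" and y0: "y0 \<in> Z j"
    using assms(4,5) unfolding assms(1) by blast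
  have "\<forall>\<^sub>F n in sequentially. \<exists>x\<in>Z i. \<exists>y\<in>Z j. dist x x0 < e \<and> dist y y0 < e \<and>
      dist ((f ^^ n) x) ((f ^^ n) y) < r"
    by (rule strongly_mixing_on_eventually_close[OF assms(3)[OF ij(1)] assms(3)[OF ij(2)]
          assms(2)[OF ij] x0 y0 assms(6,7)])
  moreover have "Z i \<subseteq> X" "Z j \<subseteq> X"
    using assms(1) ij by auto
  ultimately show ?thesis
    by (elim eventually_mono) blast
qed

lemma strongly_mixing_cover_eventually_apart:
  assumes "X = \<Union>(Z ` I)" "\<And>i j. i \<in> I \<Longrightarrow> j \<in> I \<Longrightarrow> Z i \<inter> Z j \<noteq> {}"
    and "\<And>i. i \<in> I \<Longrightarrow> strongly_mixing_on (Z i) f"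
    and "\<And>i. i \<in> I \<Longrightarrow> compact (Z i)" "\<And>i. i \<in> I \<Longrightarrow> 2 * c < diameter (Z i)"
    and "x0 \<in> X" "y0 \<in> X" "e > 0"
  shows "\<forall>\<^sub>F n in sequentially. \<exists>x\<in>X. \<exists>y\<in>X. dist x x0 < e \<and> dist y y0 < e \<and>
           c < dist ((f ^^ n) x) ((f ^^ n) y)"
proof -
  obtain i j where ij: "i \<in> I" "j \<in> I" and x0: "x0 \<in> Z i" and y0: "y0 \<in> Z j"
    using assms(6,7) unfolding assms(1) by blast
  have "\<forall>\<^sub>F n in sequentially. \<exists>x\<in>Z i. \<exists>y\<in>Z j. dist x x0 < e \<and> dist y y0 < e \<and>
      c < dist ((f ^^ n) x) ((f ^^ n) y)"
    by (rule strongly_mixing_on_eventually_apart[OF assms(3)[OF ij(1)] assms(3)[OF ij(2)]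
          assms(2)[OF ij] assms(4)[OF ij(1)] x0 y0 assms(8) assms(5)[OF ij(1)]])
  moreover have "Z i \<subseteq> X" "Z j \<subseteq> X"
    using assms(1) ij by auto
  ultimately show ?thesis
    by (elim eventually_mono) blast
qed

lemma openin_pairs_dist_iterate_in:
  assumes "continuous_on X f" "f ` X \<subseteq> X" "open T"
  shows "openin (top_of_set (X \<times> X))
           {p \<in> X \<times> X. \<exists>n\<ge>m. dist ((f ^^ n) (fst p)) ((f ^^ n) (snd p)) \<in> T}"
proof -
  have preimage_open: "openin (top_of_set (X \<times> X))
          (X \<times> X \<inter> (\<lambda>p. dist ((f ^^ n) (fst p)) ((f ^^ n) (snd p))) -` T)" for n
  proof (rule continuous_openin_preimage_gen[OF _ assms(3)])
    show "continuous_on (X \<times> X) (\<lambda>p. dist ((f ^^ n) (fst p)) ((f ^^ n) (snd p)))"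
      by (intro continuous_intros continuous_on_compose2[OF continuous_on_funpow[OF assms(1,2)]])
        auto
  qed
  have union: "{p \<in> X \<times> X. \<exists>n\<ge>m. dist ((f ^^ n) (fst p)) ((f ^^ n) (snd p)) \<in> T} =
      (\<Union>n\<in>{m..}. X \<times> X \<inter> (\<lambda>p. dist ((f ^^ n) (fst p)) ((f ^^ n) (snd p))) -` T)"
    by auto
  show ?thesis
    unfolding union by (intro openin_Union) (auto intro: preimage_open)
qed

lemma closure_of_square_eq_if_approachable:
  fixes X :: "'a::metric_space set"
  assumes "A \<subseteq> X \<times> X"
    and "\<And>x0 y0 e. x0 \<in> X \<Longrightarrow> y0 \<in> X \<Longrightarrow> e > 0 \<Longrightarrow>
           \<exists>x y. (x, y) \<in> A \<and> dist x x0 < e \<and> dist y y0 < e"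
  shows "top_of_set (X \<times> X) closure_of A = X \<times> X"
proof -
  have "(x0, y0) \<in> closure A" if xy0: "x0 \<in> X" "y0 \<in> X" for x0 y0
    unfolding closure_approachable
  proof (intro allI impI)
    fix e :: real assume "e > 0"
    then obtain x y where xy: "(x, y) \<in> A" "dist x x0 < e / 2" "dist y y0 < e / 2"
      using assms(2)[OF xy0, of "e / 2"] by auto
    have "dist (x, y) (x0, y0) \<le> dist x x0 + dist y y0"
      unfolding dist_Pair_Pair by (rule sqrt_sum_squares_le_sum) auto
    with xy show "\<exists>p\<in>A. dist p (x0, y0) < e"
      by (intro bexI[of _ "(x, y)"]) auto
  qed
  with assms(1) show ?thesis
    by (auto simp: closure_of_subtopology Int_absorb1)
qed

lemma scrambled_pairI:
  assumes close: "\<And>r. r > 0 \<Longrightarrow> \<exists>\<^sub>F n in sequentially. dist ((f ^^ n) x) ((f ^^ n) y) < r"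
    and apart: "\<exists>\<^sub>F n in sequentially. c < dist ((f ^^ n) x) ((f ^^ n) y)"
    and "eps < c"
  shows "scrambled_pair f eps x y"
proof -
  define u where "u n = ereal (dist ((f ^^ n) x) ((f ^^ n) y))" for n
  have "0 \<le> liminf u"
    by (rule Liminf_bounded) (simp add: u_def)
  moreover have "liminf u \<le> ereal r" if "r > 0" for r
  proof (rule ccontr)
    assume "\<not> liminf u \<le> ereal r"
    then have "\<forall>\<^sub>F n in sequentially. ereal r < u n"
      by (intro less_LiminfD) simp
    with close[OF that] show False
      by (simp add: u_def frequently_def eventually_mono)
  qed
  then have "liminf u \<le> 0"
    using ereal_le_epsilon2[of "liminf u" 0] by simp
  moreover have "ereal eps < limsup u"
  proof (rule ccontr)
    assume "\<not> ereal eps < limsup u"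
    then have "\<forall>\<^sub>F n in sequentially. u n < ereal c"
      using \<open>eps < c\<close> by (intro Limsup_lessD) (auto simp: not_less intro: le_less_trans)
    with apart show False
      by (simp add: u_def frequently_def eventually_mono)
  qed
  ultimately show ?thesis
    unfolding scrambled_pair_def u_def by simp
qed

lemma generically_chaoticI:
  fixes X :: "'a::metric_space set"
  assumes "continuous_on X f" "f ` X \<subseteq> X" "eps < c"
    and close: "\<And>x0 y0 e r. x0 \<in> X \<Longrightarrow> y0 \<in> X \<Longrightarrow> e > 0 \<Longrightarrow> r > 0 \<Longrightarrow>
           \<exists>\<^sub>F n in sequentially. \<exists>x\<in>X. \<exists>y\<in>X. dist x x0 < e \<and> dist y y0 < e \<and>
             dist ((f ^^ n) x) ((f ^^ n) y) < r"
    and apart: "\<And>x0 y0 e. x0 \<in> X \<Longrightarrow> y0 \<in> X \<Longrightarrow> e > 0 \<Longrightarrow>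
           \<exists>\<^sub>F n in sequentially. \<exists>x\<in>X. \<exists>y\<in>X. dist x x0 < e \<and> dist y y0 < e \<and>
             c < dist ((f ^^ n) x) ((f ^^ n) y)"
  shows "generically_chaotic X f eps"
proof -
  define S where "S m T = {p \<in> X \<times> X. \<exists>n\<ge>m. dist ((f ^^ n) (fst p)) ((f ^^ n) (snd p)) \<in> T}"
    for m T
  have open_dense: "openin (top_of_set (X \<times> X)) (S m T) \<and>
      top_of_set (X \<times> X) closure_of (S m T) = X \<times> X"
    if "open T" and approach: "\<And>x0 y0 e. x0 \<in> X \<Longrightarrow> y0 \<in> X \<Longrightarrow> e > 0 \<Longrightarrow>
           \<exists>\<^sub>F n in sequentially. \<exists>x\<in>X. \<exists>y\<in>X. dist x x0 < e \<and> dist y y0 < e \<and>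
             dist ((f ^^ n) x) ((f ^^ n) y) \<in> T" for m T
  proof
    show "openin (top_of_set (X \<times> X)) (S m T)"
      unfolding S_def by (rule openin_pairs_dist_iterate_in[OF assms(1,2) \<open>open T\<close>])
    show "top_of_set (X \<times> X) closure_of (S m T) = X \<times> X"
    proof (rule closure_of_square_eq_if_approachable)
      fix x0 y0 and e :: real assume "x0 \<in> X" "y0 \<in> X" "e > 0"
      then show "\<exists>x y. (x, y) \<in> S m T \<and> dist x x0 < e \<and> dist y y0 < e"
        using approach[of x0 y0 e] unfolding frequently_sequentially S_def by fastforce
    qed (auto simp: S_def)
  qed
  define \<F> where "\<F> = range (\<lambda>(m, j). S m {..<inverse (Suc j)}) \<union> range (\<lambda>m. S m {c<..})"
  have near_sets: "openin (top_of_set (X \<times> X)) (S m {..<inverse (Suc j)}) \<and>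
      top_of_set (X \<times> X) closure_of (S m {..<inverse (Suc j)}) = X \<times> X" for m j
  proof (rule open_dense[OF open_lessThan])
    fix x0 y0 and e :: real assume "x0 \<in> X" "y0 \<in> X" "e > 0"
    then show "\<exists>\<^sub>F n in sequentially. \<exists>x\<in>X. \<exists>y\<in>X. dist x x0 < e \<and> dist y y0 < e \<and>
        dist ((f ^^ n) x) ((f ^^ n) y) \<in> {..<inverse (Suc j)}"
      using close[of x0 y0 e "inverse (Suc j)"] by simp
  qed
  have far_sets: "openin (top_of_set (X \<times> X)) (S m {c<..}) \<and>
      top_of_set (X \<times> X) closure_of (S m {c<..}) = X \<times> X" for m
  proof (rule open_dense[OF open_greaterThan])
    fix x0 y0 and e :: real assume "x0 \<in> X" "y0 \<in> X" "e > 0"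
    then show "\<exists>\<^sub>F n in sequentially. \<exists>x\<in>X. \<exists>y\<in>X. dist x x0 < e \<and> dist y y0 < e \<and>
        dist ((f ^^ n) x) ((f ^^ n) y) \<in> {c<..}"
      using apart[of x0 y0 e] by simp
  qed
  have "openin (top_of_set (X \<times> X)) U \<and> top_of_set (X \<times> X) closure_of U = X \<times> X"
    if "U \<in> \<F>" for U
    using that near_sets far_sets unfolding \<F>_def by auto
  moreover have "scrambled_pair f eps x y" if "(x, y) \<in> X \<times> X \<inter> \<Inter>\<F>" for x y
  proof (rule scrambled_pairI[OF _ _ \<open>eps < c\<close>])
    fix r :: real assume "r > 0"
    then obtain j where j: "inverse (Suc j) < r"
      using reals_Archimedean by blast
    have "S m {..<inverse (Suc j)} \<in> \<F>" for m
      unfolding \<F>_def by (intro UnI1 image_eqI[where x = "(m, j)"]) simp_all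
    with that have "(x, y) \<in> S m {..<inverse (Suc j)}" for m
      by blast
    then have "\<exists>n\<ge>m. dist ((f ^^ n) x) ((f ^^ n) y) < inverse (Suc j)" for m
      unfolding S_def by auto
    with j show "\<exists>\<^sub>F n in sequentially. dist ((f ^^ n) x) ((f ^^ n) y) < r"
      unfolding frequently_sequentially by (meson less_trans)
  next
    have "S m {c<..} \<in> \<F>" for m
      unfolding \<F>_def by blast
    with that have "(x, y) \<in> S m {c<..}" for m
      by blast
    then show "\<exists>\<^sub>F n in sequentially. c < dist ((f ^^ n) x) ((f ^^ n) y)"
      unfolding frequently_sequentially S_def by auto
  qed
  moreover have "countable \<F>"
    unfolding \<F>_def by simp
  ultimately show ?thesis
    unfolding generically_chaotic_def residual_in_def by (intro exI[of _ \<F>]) auto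
qed

lemma generically_chaotic_if_mixing_cover:
  assumes "continuous_on X f" "f ` X \<subseteq> X"
    and "X = \<Union>(Z ` I)" "\<And>i j. i \<in> I \<Longrightarrow> j \<in> I \<Longrightarrow> Z i \<inter> Z j \<noteq> {}"
    and "\<And>i. i \<in> I \<Longrightarrow> strongly_mixing_on (Z i) f"
    and "\<And>i. i \<in> I \<Longrightarrow> compact (Z i)" "\<And>i. i \<in> I \<Longrightarrow> 2 * c < diameter (Z i)"
    and "eps < c"
  shows "generically_chaotic X f eps"
proof (rule generically_chaoticI[OF assms(1,2,8)])
  fix x0 y0 and e r :: real assume "x0 \<in> X" "y0 \<in> X" "e > 0" "r > 0"
  then show "\<exists>\<^sub>F n in sequentially. \<exists>x\<in>X. \<exists>y\<in>X.
      dist x x0 < e \<and> dist y y0 < e \<and> dist ((f ^^ n) x) ((f ^^ n) y) < r"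
    by (intro eventually_frequently[OF sequentially_bot]
        strongly_mixing_cover_eventually_close[OF assms(3-5)])
next
  fix x0 y0 and e :: real assume "x0 \<in> X" "y0 \<in> X" "e > 0"
  then show "\<exists>\<^sub>F n in sequentially. \<exists>x\<in>X. \<exists>y\<in>X.
      dist x x0 < e \<and> dist y y0 < e \<and> c < dist ((f ^^ n) x) ((f ^^ n) y)"
    by (intro eventually_frequently[OF sequentially_bot]
        strongly_mixing_cover_eventually_apart[OF assms(3-7)])
qed

theorem lemma33:
  fixes X :: "'a::metric_space set" and f :: "'a \<Rightarrow> 'a"
    and k :: nat and Z :: "nat \<Rightarrow> 'a set" and eps :: real
  assumes "compact X"
    and "continuous_on X f" and "f ` X \<subseteq> X"
    and "k \<ge> 1"
    and "\<And>i. i < k \<Longrightarrow> closed (Z i)"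
    and "\<And>i. i < k \<Longrightarrow> f ` Z i \<subseteq> Z i"
    and "X = (\<Union>i<k. Z i)"
    and "\<And>i j. i < k \<Longrightarrow> j < k \<Longrightarrow> Z i \<inter> Z j \<noteq> {}"
    and "\<And>i. i < k \<Longrightarrow> strongly_mixing_on (Z i) f"
    and "0 < eps"
    and "eps < Min ((\<lambda>i. diameter (Z i)) ` {..<k}) / 2"
  shows "generically_chaotic X f eps"
proof -
  define \<delta> where "\<delta> = Min ((\<lambda>i. diameter (Z i)) ` {..<k})"
  define c where "c = (eps + \<delta> / 2) / 2"
  have "eps < c" "2 * c < \<delta>"
    using assms(11) by (simp_all add: c_def \<delta>_def)
  have diam: "2 * c < diameter (Z i)" if "i \<in> {..<k}" for i
  proof -
    have "\<delta> \<le> diameter (Z i)"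
      unfolding \<delta>_def using that by (intro Min_le) auto
    with \<open>2 * c < \<delta>\<close> show ?thesis
      by linarith
  qed
  have compact: "compact (Z i)" if "i \<in> {..<k}" for i
  proof -
    have "Z i \<subseteq> X" "closed (Z i)"
      using assms(5,7) that by auto
    then show ?thesis
      using compact_Int_closed[OF assms(1), of "Z i"] by (simp add: Int_absorb1)
  qed
  show ?thesis
    using assms(8,9) by (intro generically_chaotic_if_mixing_cover[OF assms(2,3,7) _ _ compact diam
          \<open>eps < c\<close>]) simp_all
qed

end
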